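(* Every quantifier-free formula in the signature $\{\cup,\cap,\bot,c_0,\min,\max,\mathrm{ips}\}$ is equivalent in the structure $\mathcal{W}(I)$ to a positive existential formula in the same signature.
   Context: Let $I$ be a dense linear order with left endpoint $0$ and no right endpoint. $\mathcal{W}(I)$ is the structure whose universe is the set $\mathcal{P}_{\mathrm{fin}}(I)$ of finite subsets of $I$, interpreted as follows. - $\cup$ and $\cap$ are union and intersection. - $\bot$ is $\emptyset$, and $c_0$ is $\{0\}$. - $\min$ and $\max$ send a nonempty finite set to the singleton of its minimum, respectively maximum, and both fix $\emptyset$. - $\mathrm{ips}$ is the binary function $\mathrm{ips}(A,B)=\{i\in A: s_A(i)\in B\}$, where $s_A$ is the successor function of the finite linear order $A$. A positive existential formula is one built from atomic formulas using only $\wedge$, $\vee$ and $\exists$. *)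

theory Defs
  imports Main
begin

datatype trm = Var nat | TUn trm trm | TInt trm trm | TBot | TC0 | TMin trm | TMax trm | TIps trm trm

datatype fm = Eq trm trm | Neg fm | Conj fm fm | Disj fm fm | Ex nat fm | All nat fm

definition minset :: "'a::linorder set \<Rightarrow> 'a set" where
  "minset A = (if A = {} then {} else {Min A})"

definition maxset :: "'a::linorder set \<Rightarrow> 'a set" where
  "maxset A = (if A = {} then {} else {Max A})"

definition succ_in :: "'a::linorder set \<Rightarrow> 'a \<Rightarrow> 'a \<Rightarrow> bool" where
  "succ_in A i j \<longleftrightarrow> j \<in> A \<and> i < j \<and> (\<forall>k\<in>A. i < k \<longrightarrow> j \<le> k)"

definition ips :: "'a::linorder set \<Rightarrow> 'a set \<Rightarrow> 'a set" where
  "ips A B = {i \<in> A. \<exists>j. succ_in A i j \<and> j \<in> B}"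

text \<open>Interpretation in W(I): the left endpoint 0 of I is bot.\<close>
primrec evalt :: "(nat \<Rightarrow> 'a::{linorder,order_bot} set) \<Rightarrow> trm \<Rightarrow> 'a set" where
  "evalt v (Var n) = v n"
| "evalt v (TUn s t) = evalt v s \<union> evalt v t"
| "evalt v (TInt s t) = evalt v s \<inter> evalt v t"
| "evalt v TBot = {}"
| "evalt v TC0 = {bot}"
| "evalt v (TMin t) = minset (evalt v t)"
| "evalt v (TMax t) = maxset (evalt v t)"
| "evalt v (TIps s t) = ips (evalt v s) (evalt v t)"

primrec sat :: "(nat \<Rightarrow> 'a::{linorder,order_bot} set) \<Rightarrow> fm \<Rightarrow> bool" where
  "sat v (Eq s t) = (evalt v s = evalt v t)"
| "sat v (Neg f) = (\<not> sat v f)"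
| "sat v (Conj f g) = (sat v f \<and> sat v g)"
| "sat v (Disj f g) = (sat v f \<or> sat v g)"
| "sat v (Ex n f) = (\<exists>A. finite A \<and> sat (v(n := A)) f)"
| "sat v (All n f) = (\<forall>A. finite A \<longrightarrow> sat (v(n := A)) f)"

primrec qfree :: "fm \<Rightarrow> bool" where
  "qfree (Eq s t) = True"
| "qfree (Neg f) = qfree f"
| "qfree (Conj f g) = (qfree f \<and> qfree g)"
| "qfree (Disj f g) = (qfree f \<and> qfree g)"
| "qfree (Ex n f) = False"
| "qfree (All n f) = False"

primrec posex :: "fm \<Rightarrow> bool" where
  "posex (Eq s t) = True"
| "posex (Neg f) = False"
| "posex (Conj f g) = (posex f \<and> posex g)"
| "posex (Disj f g) = (posex f \<and> posex g)"
| "posex (Ex n f) = posex f"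
| "posex (All n f) = False"

end

theory Submission
  imports Defs
begin

text \<open>
  Push negations down to the equations; then only negated equations s \<noteq> t need
  replacing. In W(I), s \<noteq> t holds iff some nonempty finite z lies inside one side and
  is disjoint from the other, which is positive existential once nonemptiness is: z is
  nonempty iff 0 \<in> z \<union> ips({0} \<union> z, z), because when 0 \<notin> z the successor of 0 in
  {0} \<union> z is min z.
\<close>

primrec max_var :: "trm \<Rightarrow> nat" where
  "max_var (Var n) = n"
| "max_var (TUn s t) = max (max_var s) (max_var t)"
| "max_var (TInt s t) = max (max_var s) (max_var t)"
| "max_var TBot = 0"
| "max_var TC0 = 0"
| "max_var (TMin t) = max_var t"
| "max_var (TMax t) = max_var t"
| "max_var (TIps s t) = max (max_var s) (max_var t)"

lemma evalt_fun_upd_fresh: "max_var t < n \<Longrightarrow> evalt (v(n := A)) t = evalt v t"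
  by (induction t) auto

lemma bot_in_ips_insert_bot_iff:
  fixes z :: "'a::{linorder,order_bot} set"
  assumes "finite z"
  shows "bot \<in> z \<union> ips (insert bot z) z \<longleftrightarrow> z \<noteq> {}"
proof
  assume "bot \<in> z \<union> ips (insert bot z) z"
  then show "z \<noteq> {}" by (auto simp: ips_def succ_in_def)
next
  assume "z \<noteq> {}"
  show "bot \<in> z \<union> ips (insert bot z) z"
  proof (cases "bot \<in> z")
    case False
    have "Min z \<in> z" using \<open>z \<noteq> {}\<close> assms by simp
    then have "bot < Min z" using False bot.not_eq_extremum by fastforce
    then have "succ_in (insert bot z) bot (Min z)"
      using \<open>Min z \<in> z\<close> assms by (auto simp: succ_in_def)
    with \<open>Min z \<in> z\<close> show ?thesis by (auto simp: ips_def)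
  qed simp
qed

definition nonempty_fm :: "trm \<Rightarrow> fm" where
  "nonempty_fm w = Eq (TInt TC0 (TUn w (TIps (TUn TC0 w) w))) TC0"

lemma sat_nonempty_fm:
  fixes v :: "nat \<Rightarrow> 'a::{linorder,order_bot} set"
  assumes "finite (evalt v w)"
  shows "sat v (nonempty_fm w) \<longleftrightarrow> evalt v w \<noteq> {}"
  using bot_in_ips_insert_bot_iff[OF assms] by (auto simp: nonempty_fm_def)

definition not_subset_fm :: "trm \<Rightarrow> trm \<Rightarrow> fm" where
  "not_subset_fm s t = (let z = Suc (max (max_var s) (max_var t)) in
     Ex z (Conj (Eq (TInt (Var z) s) (Var z))
          (Conj (Eq (TInt (Var z) t) TBot) (nonempty_fm (Var z)))))"

lemma sat_not_subset_fm:
  fixes v :: "nat \<Rightarrow> 'a::{linorder,order_bot} set"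
  shows "sat v (not_subset_fm s t) \<longleftrightarrow> \<not> evalt v s \<subseteq> evalt v t"
proof -
  define z where "z = Suc (max (max_var s) (max_var t))"
  have fresh: "evalt (v(z := A)) s = evalt v s" "evalt (v(z := A)) t = evalt v t" for A
    by (simp_all add: evalt_fun_upd_fresh z_def)
  have "sat v (not_subset_fm s t) \<longleftrightarrow>
      (\<exists>A. finite A \<and> A \<subseteq> evalt v s \<and> A \<inter> evalt v t = {} \<and> A \<noteq> {})"
    using sat_nonempty_fm[of "v(z := _)" "Var z"]
    by (simp add: not_subset_fm_def Let_def fresh flip: z_def) blast
  also have "\<dots> \<longleftrightarrow> \<not> evalt v s \<subseteq> evalt v t"
  proof
    assume "\<not> evalt v s \<subseteq> evalt v t"
    then obtain x where "x \<in> evalt v s" "x \<notin> evalt v t" by blast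
    then show "\<exists>A. finite A \<and> A \<subseteq> evalt v s \<and> A \<inter> evalt v t = {} \<and> A \<noteq> {}"
      by (intro exI[of _ "{x}"]) auto
  qed blast
  finally show ?thesis .
qed

definition neq_fm :: "trm \<Rightarrow> trm \<Rightarrow> fm" where
  "neq_fm s t = Disj (not_subset_fm s t) (not_subset_fm t s)"

lemma sat_neq_fm: "sat v (neq_fm s t) \<longleftrightarrow> evalt v s \<noteq> evalt v t"
  by (auto simp: neq_fm_def sat_not_subset_fm)

fun to_posex :: "bool \<Rightarrow> fm \<Rightarrow> fm" where
  "to_posex True (Eq s t) = Eq s t"
| "to_posex False (Eq s t) = neq_fm s t"
| "to_posex p (Neg f) = to_posex (\<not> p) f"
| "to_posex True (Conj f g) = Conj (to_posex True f) (to_posex True g)"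
| "to_posex False (Conj f g) = Disj (to_posex False f) (to_posex False g)"
| "to_posex True (Disj f g) = Disj (to_posex True f) (to_posex True g)"
| "to_posex False (Disj f g) = Conj (to_posex False f) (to_posex False g)"
| "to_posex p (Ex n f) = Eq TBot TBot"
| "to_posex p (All n f) = Eq TBot TBot"

lemma posex_to_posex: "posex (to_posex p f)"
  by (induction p f rule: to_posex.induct)
    (auto simp: neq_fm_def not_subset_fm_def nonempty_fm_def Let_def)

lemma sat_to_posex:
  fixes v :: "nat \<Rightarrow> 'a::{linorder,order_bot} set"
  shows "qfree f \<Longrightarrow> sat v (to_posex p f) \<longleftrightarrow> sat v f = p"
  by (induction p f rule: to_posex.induct) (auto simp: sat_neq_fm)

theorem proposition3p5:
  fixes \<phi> :: fm
  assumes "qfree \<phi>"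
  shows "\<exists>\<psi>. posex \<psi> \<and>
           (\<forall>v :: nat \<Rightarrow> 'a::{dense_linorder, order_bot, no_top} set.
              (\<forall>n. finite (v n)) \<longrightarrow> (sat v \<phi> \<longleftrightarrow> sat v \<psi>))"
  using posex_to_posex sat_to_posex[OF assms, of _ True] by blast

end
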